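(* Let $X$, $Y$ be normed vector spaces, let $f\colon X\to Y$ be continuously open at $x^*\in X$, and let $K$ be a compact neighborhood of $x^*$. Then $$\sup_{x\in K}\|f(x)\|\ \ge\ \|f(x^* )\|+\Gamma_{f(x^* )}\Big(f\big(\mathbb{B}_{\Gamma_{x^*}(K)}(x^* )\big)\Big).$$
   Context: $\mathbb{B}_r(x)$ denotes the open ball of radius $r$ centered at $x$. For metric spaces $X,Y$ and $x\in X$, $f$ is continuously open at $x$ if there is a continuous, positive definite (i.e. $g(0)=0$, $g(r)>0$ for $r>0$), monotonically increasing function $g$ with $\mathbb{B}_{g(r)}(f(x))\subseteq f(\mathbb{B}_r(x))$ for all sufficiently small $r>0$. For a normed space $Z$, $z^*\in Z$ and $K\subseteq Z$, the inradius of $K$ at $z^*$ is $\Gamma_{z^*}(K)=\sup\{r\ge0:\mathbb{B}_r(z^* )\subseteq K\}$. *)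

theory Defs
  imports "HOL-Analysis.Analysis"
begin

definition continuously_open_at :: "('a::metric_space \<Rightarrow> 'b::metric_space) \<Rightarrow> 'a \<Rightarrow> bool" where
  "continuously_open_at f x \<longleftrightarrow>
     (\<exists>g :: real \<Rightarrow> real.
        continuous_on {0..} g \<and> g 0 = 0 \<and> (\<forall>r>0. g r > 0) \<and> mono_on {0..} g \<and>
        (\<exists>\<delta>>0. \<forall>r. 0 < r \<and> r < \<delta> \<longrightarrow> ball (f x) (g r) \<subseteq> f ` ball x r))"

definition eball :: "'a::metric_space \<Rightarrow> ereal \<Rightarrow> 'a set" where
  "eball z e = {y. ereal (dist z y) < e}"

definition inradius :: "'a::metric_space \<Rightarrow> 'a set \<Rightarrow> ereal" where
  "inradius z K = Sup {ereal r | r. r \<ge> 0 \<and> ball z r \<subseteq> K}"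

end

theory Submission
  imports Defs
begin

text \<open>The ball of radius \<open>\<Gamma>\<^sub>x\<^sub>*(K)\<close> around \<open>x*\<close> lies in \<open>K\<close>, so its image lies in \<open>f(K)\<close>,
and the inradius can only grow when passing to \<open>f(K)\<close>. If a ball of radius \<open>r\<close> around
\<open>z = f(x*)\<close> lies in \<open>f(K)\<close>, then moving from \<open>z\<close> radially outwards (in any direction
if \<open>z = 0\<close>) gives points of \<open>f(K)\<close> of norm arbitrarily close to \<open>\<parallel>z\<parallel> + r\<close>.\<close>

lemma inradius_mono:
  assumes "A \<subseteq> B"
  shows "inradius z A \<le> inradius z B"
  unfolding inradius_def using assms by (fastforce intro!: Sup_subset_mono)

lemma eball_inradius_subset: "eball z (inradius z K) \<subseteq> K"
proof
  fix y assume "y \<in> eball z (inradius z K)"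
  then have "ereal (dist z y) < Sup {ereal r | r. r \<ge> 0 \<and> ball z r \<subseteq> K}"
    unfolding eball_def inradius_def by simp
  then obtain r where "ball z r \<subseteq> K" "dist z y < r"
    by (auto simp: less_Sup_iff)
  then show "y \<in> K" by auto
qed

lemma exists_unit_norm_add_scaleR:
  fixes z :: "'a::real_normed_vector"
  assumes "\<exists>y::'a. y \<noteq> 0"
  obtains u where "norm u = 1" "\<And>t. t \<ge> 0 \<Longrightarrow> norm (z + t *\<^sub>R u) = norm z + t"
proof (cases "z = 0")
  case True
  from assms obtain y :: 'a where "y \<noteq> 0" by blast
  with True show ?thesis
    by (intro that[of "y /\<^sub>R norm y"]) auto
next
  case False
  have "norm (z + t *\<^sub>R sgn z) = norm z + t" if "t \<ge> 0" for t
  proof -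
    have "z + t *\<^sub>R sgn z = (1 + t / norm z) *\<^sub>R z"
      by (simp add: sgn_div_norm algebra_simps divide_inverse_commute)
    also have "norm \<dots> = (1 + t / norm z) * norm z"
      using that by simp
    also have "\<dots> = norm z + t"
      using False by (simp add: distrib_right)
    finally show ?thesis .
  qed
  with False show ?thesis
    by (intro that[of "sgn z"]) (auto simp: norm_sgn)
qed

lemma norm_add_radius_le_SUP_norm:
  fixes z :: "'a::real_normed_vector"
  assumes "\<exists>y::'a. y \<noteq> 0" and "z \<in> S" and "ball z r \<subseteq> S"
  shows "ereal (norm z + r) \<le> (SUP y\<in>S. ereal (norm y))"
proof (rule dense_le)
  let ?M = "SUP y\<in>S. ereal (norm y)"
  obtain u where u: "norm u = 1" "\<And>t. t \<ge> 0 \<Longrightarrow> norm (z + t *\<^sub>R u) = norm z + t"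
    using exists_unit_norm_add_scaleR[OF assms(1)] by blast
  fix s assume s: "s < ereal (norm z + r)"
  show "s \<le> ?M"
  proof (cases "s \<le> ereal (norm z)")
    case True
    then show ?thesis
      using \<open>z \<in> S\<close> by (auto intro: SUP_upper2)
  next
    case False
    with s obtain s' where s': "s = ereal s'" "norm z < s'" "s' < norm z + r"
      by (cases s) auto
    define t where "t = s' - norm z"
    have "z + t *\<^sub>R u \<in> S"
      using s' u(1) assms(3) by (auto simp: t_def dist_norm)
    moreover have "norm (z + t *\<^sub>R u) = s'"
      using s' u(2)[of t] by (simp add: t_def)
    ultimately show ?thesis
      using s'(1) by (metis SUP_upper)
  qed
qed

lemma norm_add_inradius_le_SUP_norm:
  fixes z :: "'a::real_normed_vector"
  assumes "\<exists>y::'a. y \<noteq> 0" and "z \<in> S"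
  shows "ereal (norm z) + inradius z S \<le> (SUP y\<in>S. ereal (norm y))"
proof -
  let ?R = "{ereal r | r. r \<ge> 0 \<and> ball z r \<subseteq> S}"
  have "?R \<noteq> {}" by force
  then have "ereal (norm z) + inradius z S = (SUP \<rho>\<in>?R. ereal (norm z) + \<rho>)"
    unfolding inradius_def by (simp add: SUP_ereal_add_right)
  also have "\<dots> \<le> (SUP y\<in>S. ereal (norm y))"
    using norm_add_radius_le_SUP_norm[OF assms] by (auto intro!: SUP_least)
  finally show ?thesis .
qed

theorem corollary1:
  fixes f :: "'a::real_normed_vector \<Rightarrow> 'b::real_normed_vector"
    and xs :: 'a and K :: "'a set"
  assumes nontriv: "\<exists>y::'b. y \<noteq> 0"
    and copen: "continuously_open_at f xs"
    and compK: "compact K" and nbhd: "xs \<in> interior K"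
  shows "(SUP x\<in>K. ereal (norm (f x))) \<ge>
           ereal (norm (f xs)) + inradius (f xs) (f ` eball xs (inradius xs K))"
proof -
  have "f xs \<in> f ` K"
    using nbhd interior_subset by blast
  have "inradius (f xs) (f ` eball xs (inradius xs K)) \<le> inradius (f xs) (f ` K)"
    by (intro inradius_mono image_mono eball_inradius_subset)
  then have "ereal (norm (f xs)) + inradius (f xs) (f ` eball xs (inradius xs K))
      \<le> ereal (norm (f xs)) + inradius (f xs) (f ` K)"
    by (rule add_left_mono)
  also have "\<dots> \<le> (SUP y\<in>f ` K. ereal (norm y))"
    using norm_add_inradius_le_SUP_norm[OF nontriv \<open>f xs \<in> f ` K\<close>] .
  finally show ?thesis
    by (simp add: image_image)
qed

end
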